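(* Consider companies $i$ with parameters $\pi^0_i,\pi^1_i,\gamma_i>0$, $\mathrm{E}^{\mathrm{bau}}_i=\pi^0_i/\pi^1_i$, $\varrho_i=1/\pi^1_i+1/\gamma_i$, and a penalty $\lambda>0$ with $\lambda\varrho_i<\mathrm{E}^{\mathrm{bau}}_i$ for all $i$. Under the market scheme, for each company $i$: (1) If company $i$ purchases certificates directly at a given spot price $S$, its optimal demand is $\bm{\delta_i}(\bm{P_i}(S))=\bm{\delta_i}(S)=\mathrm{E}^{\mathrm{bau}}_i-S\varrho_i$. (2) If company $i$ purchases through a financial intermediary, then under the feasibility assumption $0<S\le2\lambda-\max_j(\mathrm{E}^{\mathrm{bau}}_j/\varrho_j)$ on the spot price $S$, the intermediated price is $\bm{P_i}(S)=\tfrac12(S+\mathrm{E}^{\mathrm{bau}}_i/\varrho_i)$, and the company's optimal demand at this price is $\bm{\delta_i}(\bm{P_i}(S))=\tfrac12(\mathrm{E}^{\mathrm{bau}}_i-S\varrho_i)$.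
   Context: Company $i$ has raw wealth $\pi_i(q)=\pi^0_iq-\tfrac{\pi^1_i}{2}q^2$, emissions $q$ reduced to $e^{-a}q$ at green cost $\tfrac{\gamma_i}{2}[(1-e^{-a})q]^2$. Facing a certificate price $P$, it maximizes $\pi_i(q)-\tfrac{\gamma_i}{2}[(1-e^{-a})q]^2-\delta P-\lambda(e^{-a}q-\delta)^+$ over $(q,a,\delta)$; its optimal certificate demand is denoted $\bm{\delta_i}(P)$ (equal to $\mathrm{E}^{\mathrm{bau}}_i-P\varrho_i$ for $0<P\le\lambda$). When buying directly at the auction, $\bm{P_i}(S)=S$. When buying through a financial intermediary that buys at spot price $S$, the intermediary sets $\bm{P_i}(S)=\arg\max_{P\in[S,\lambda]}\bm{\delta_i}(P)(P-S)$. *)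

theory Defs
  imports Complex_Main
begin

definition raw_wealth :: "real \<Rightarrow> real \<Rightarrow> real \<Rightarrow> real" where
  "raw_wealth p0 p1 q = p0 * q - p1 / 2 * q\<^sup>2"

definition objective ::
  "real \<Rightarrow> real \<Rightarrow> real \<Rightarrow> real \<Rightarrow> real \<Rightarrow> real \<Rightarrow> real \<Rightarrow> real \<Rightarrow> real" where
  "objective p0 p1 g lam P q a d =
     raw_wealth p0 p1 q - g / 2 * ((1 - exp (- a)) * q)\<^sup>2 - d * P
     - lam * max 0 (exp (- a) * q - d)"

definition admissible :: "real \<Rightarrow> real \<Rightarrow> real \<Rightarrow> bool" where
  "admissible q a d \<longleftrightarrow> q \<ge> 0 \<and> a \<ge> 0 \<and> d \<ge> 0"

definition optimal_demands :: "real \<Rightarrow> real \<Rightarrow> real \<Rightarrow> real \<Rightarrow> real \<Rightarrow> real set" where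
  "optimal_demands p0 p1 g lam P =
     {d. \<exists>q a. admissible q a d \<and>
          (\<forall>q' a' d'. admissible q' a' d' \<longrightarrow>
             objective p0 p1 g lam P q' a' d' \<le> objective p0 p1 g lam P q a d)}"

text \<open>Optimal certificate demand delta_i(P). For P < lambda the optimal d is unique;
  at P = lambda every d up to the emission level is optimal and we take the largest one
  (convention: Sup).\<close>
definition demand :: "real \<Rightarrow> real \<Rightarrow> real \<Rightarrow> real \<Rightarrow> real \<Rightarrow> real" where
  "demand p0 p1 g lam P = Sup (optimal_demands p0 p1 g lam P)"

definition direct_price :: "real \<Rightarrow> real" where
  "direct_price S = S"

definition intermediary_price :: "real \<Rightarrow> real \<Rightarrow> real \<Rightarrow> real \<Rightarrow> real \<Rightarrow> real" where
  "intermediary_price p0 p1 g lam S =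
     (THE P. P \<in> {S..lam} \<and>
        (\<forall>P'\<in>{S..lam}. demand p0 p1 g lam P' * (P' - S) \<le> demand p0 p1 g lam P * (P - S)))"

definition Ebau :: "real \<Rightarrow> real \<Rightarrow> real" where
  "Ebau p0 p1 = p0 / p1"

definition rho :: "real \<Rightarrow> real \<Rightarrow> real" where
  "rho p1 g = 1 / p1 + 1 / g"

end

theory Submission imports Defs begin

text \<open>Completing the squares in the objective shows that, for \<open>0 \<le> P \<le> lam\<close>, the company
  can do no better than the unconstrained optimum \<open>q = (p0 - P)/p1\<close>, \<open>(1 - exp (-a)) q = P/g\<close>,
  and that for \<open>P > 0\<close> it must then buy exactly its residual emissions
  \<open>exp (-a) q = Ebau - P rho\<close>. The intermediary thus faces a linear demand, and its revenue
  \<open>(Ebau - P rho)(P - S)\<close> is a concave parabola in \<open>P\<close> whose vertex \<open>(S + Ebau/rho)/2\<close>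
  lies in \<open>[S, lam]\<close> under the feasibility assumption on \<open>S\<close>.\<close>

definition max_objective :: "real \<Rightarrow> real \<Rightarrow> real \<Rightarrow> real \<Rightarrow> real" where
  "max_objective p0 p1 g P = (p0 - P)\<^sup>2 / (2 * p1) + P\<^sup>2 / (2 * g)"

lemma Ebau_minus_rho_eq: "Ebau p0 p1 - P * rho p1 g = (p0 - P) / p1 - P / g"
  by (simp add: Ebau_def rho_def diff_divide_distrib algebra_simps)

lemma rho_pos: "p1 > 0 \<Longrightarrow> g > 0 \<Longrightarrow> rho p1 g > 0"
  by (simp add: rho_def add_pos_pos)

lemma residual_emissions_pos:
  assumes "p1 > 0" "g > 0" "P \<le> lam" "lam * rho p1 g < Ebau p0 p1"
  shows "P * rho p1 g < Ebau p0 p1"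
  using mult_right_mono[OF assms(3) less_imp_le[OF rho_pos[OF assms(1,2)]]] assms(4) by linarith

lemma objective_completed_square:
  assumes "p1 > 0" "g > 0"
  shows "objective p0 p1 g lam P q a d =
     max_objective p0 p1 g P - p1 / 2 * (q - (p0 - P) / p1)\<^sup>2
     - g / 2 * ((1 - exp (- a)) * q - P / g)\<^sup>2
     - (P * (d - exp (- a) * q) + lam * max 0 (exp (- a) * q - d))"
  using assms unfolding objective_def raw_wealth_def max_objective_def
  by (simp add: field_simps power2_eq_square)

lemma certificate_cost_nonneg:
  fixes P lam d e :: real
  assumes "0 \<le> P" "P \<le> lam"
  shows "0 \<le> P * (d - e) + lam * max 0 (e - d)"
proof (cases "e \<le> d")
  case True
  then show ?thesis using assms by (simp add: max_def)
next
  case False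
  then have "P * (d - e) + lam * max 0 (e - d) = (lam - P) * (e - d)"
    by (simp add: max_def algebra_simps)
  then show ?thesis using False assms by simp
qed

lemma objective_le_max_objective:
  assumes "p1 > 0" "g > 0" "0 \<le> P" "P \<le> lam"
  shows "objective p0 p1 g lam P q a d \<le> max_objective p0 p1 g P"
proof -
  have "0 \<le> p1 / 2 * (q - (p0 - P) / p1)\<^sup>2" "0 \<le> g / 2 * ((1 - exp (- a)) * q - P / g)\<^sup>2"
    using assms(1,2) by simp_all
  then show ?thesis
    using objective_completed_square[OF assms(1,2), of p0 lam P q a d]
      certificate_cost_nonneg[OF assms(3,4), of d "exp (- a) * q"] by linarith
qed

lemma max_objective_attained:
  assumes p1: "p1 > 0" and g: "g > 0" and P: "0 \<le> P"
    and residual_pos: "P * rho p1 g < Ebau p0 p1"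
  shows "\<exists>q a. admissible q a (Ebau p0 p1 - P * rho p1 g)
           \<and> objective p0 p1 g lam P q a (Ebau p0 p1 - P * rho p1 g) = max_objective p0 p1 g P"
proof -
  define q where "q = (p0 - P) / p1"
  define e where "e = Ebau p0 p1 - P * rho p1 g"
  have e_eq: "e = q - P / g"
    by (simp add: e_def q_def Ebau_minus_rho_eq)
  have e_pos: "e > 0" using residual_pos by (simp add: e_def)
  have "P / g \<ge> 0" using P g by simp
  then have q_ge: "q \<ge> e" using e_eq by simp
  define a where "a = ln (q / e)"
  have exp_a: "exp (- a) * q = e"
    using e_pos q_ge by (simp add: a_def exp_minus)
  have "admissible q a e"
    using e_pos q_ge by (simp add: admissible_def a_def)
  moreover have "objective p0 p1 g lam P q a e = max_objective p0 p1 g P"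
  proof -
    have "(1 - exp (- a)) * q - P / g = 0" using exp_a e_eq by (simp add: algebra_simps)
    moreover have "q - (p0 - P) / p1 = 0" by (simp add: q_def)
    ultimately show ?thesis
      using objective_completed_square[OF p1 g, of p0 lam P q a e] exp_a by simp
  qed
  ultimately show ?thesis unfolding e_def by blast
qed

lemma optimal_demands_le_residual_emissions:
  assumes p1: "p1 > 0" and g: "g > 0" and P: "0 < P" "P \<le> lam"
    and residual_pos: "P * rho p1 g < Ebau p0 p1"
    and d: "d \<in> optimal_demands p0 p1 g lam P"
  shows "d \<le> Ebau p0 p1 - P * rho p1 g"
proof -
  obtain q' a' where adm': "admissible q' a' (Ebau p0 p1 - P * rho p1 g)"
    and max': "objective p0 p1 g lam P q' a' (Ebau p0 p1 - P * rho p1 g) = max_objective p0 p1 g P"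
    using max_objective_attained[OF p1 g _ residual_pos] P by fastforce
  obtain q a where "admissible q a d"
    and "objective p0 p1 g lam P q' a' (Ebau p0 p1 - P * rho p1 g) \<le> objective p0 p1 g lam P q a d"
    using d adm' unfolding optimal_demands_def by blast
  then have "max_objective p0 p1 g P \<le> objective p0 p1 g lam P q a d"
    using max' by simp
  moreover have "0 \<le> p1 / 2 * (q - (p0 - P) / p1)\<^sup>2"
    and "0 \<le> g / 2 * ((1 - exp (- a)) * q - P / g)\<^sup>2"
    using p1 g by simp_all
  moreover note objective_completed_square[OF p1 g, of p0 lam P q a d]
    certificate_cost_nonneg[of P lam d "exp (- a) * q"]
  ultimately have "p1 / 2 * (q - (p0 - P) / p1)\<^sup>2 = 0"
    and "g / 2 * ((1 - exp (- a)) * q - P / g)\<^sup>2 = 0"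
    and cost: "P * (d - exp (- a) * q) + lam * max 0 (exp (- a) * q - d) \<le> 0"
    using P by linarith+
  then have q: "q = (p0 - P) / p1" and abated: "(1 - exp (- a)) * q = P / g"
    using p1 g by auto
  from abated have "exp (- a) * q = q - P / g"
    by (simp add: algebra_simps)
  then have residual: "exp (- a) * q = Ebau p0 p1 - P * rho p1 g"
    unfolding Ebau_minus_rho_eq q .
  have "0 \<le> lam * max 0 (exp (- a) * q - d)"
    using P by simp
  then have "P * (d - (Ebau p0 p1 - P * rho p1 g)) \<le> 0"
    using cost unfolding residual by linarith
  then show ?thesis
    using P by (simp add: mult_le_0_iff)
qed

lemma demand_eq_residual_emissions:
  assumes p1: "p1 > 0" and g: "g > 0" and P: "0 < P" "P \<le> lam"
    and residual_pos: "P * rho p1 g < Ebau p0 p1"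
  shows "demand p0 p1 g lam P = Ebau p0 p1 - P * rho p1 g"
  unfolding demand_def
proof (rule cSup_eq_maximum)
  obtain q a where adm: "admissible q a (Ebau p0 p1 - P * rho p1 g)"
    and max: "objective p0 p1 g lam P q a (Ebau p0 p1 - P * rho p1 g) = max_objective p0 p1 g P"
    using max_objective_attained[OF p1 g _ residual_pos] P by fastforce
  have "objective p0 p1 g lam P q' a' d' \<le> objective p0 p1 g lam P q a (Ebau p0 p1 - P * rho p1 g)"
    for q' a' d'
    using objective_le_max_objective[OF p1 g, of P lam p0 q' a' d'] P max by simp
  with adm show "Ebau p0 p1 - P * rho p1 g \<in> optimal_demands p0 p1 g lam P"
    unfolding optimal_demands_def by blast
next
  show "d \<le> Ebau p0 p1 - P * rho p1 g" if "d \<in> optimal_demands p0 p1 g lam P" for d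
    using optimal_demands_le_residual_emissions[OF p1 g P residual_pos that] .
qed

lemma argmax_linear_revenue:
  fixes D :: "real \<Rightarrow> real"
  assumes r: "r > 0"
    and D: "\<And>P. P \<in> {S..lam} \<Longrightarrow> D P = E - P * r"
    and vertex: "(S + E / r) / 2 \<in> {S..lam}"
  shows "(THE P. P \<in> {S..lam} \<and> (\<forall>P'\<in>{S..lam}. D P' * (P' - S) \<le> D P * (P - S)))
         = (S + E / r) / 2"
proof -
  define V where "V = (S + E / r) / 2"
  have V: "V \<in> {S..lam}" using vertex by (simp add: V_def)
  have revenue: "D P * (P - S) = D V * (V - S) - r * (P - V)\<^sup>2" if "P \<in> {S..lam}" for P
  proof -
    have E: "E = r * (2 * V - S)" using r by (simp add: V_def field_simps)
    have DV: "D V = r * (2 * V - S) - V * r" using D[OF V] by (simp add: E)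
    have DP: "D P = r * (2 * V - S) - P * r" using D[OF that] by (simp add: E)
    show ?thesis unfolding DV DP by (simp add: power2_eq_square algebra_simps)
  qed
  show ?thesis
    unfolding V_def[symmetric]
  proof (rule the_equality)
    have "D P' * (P' - S) \<le> D V * (V - S)" if "P' \<in> {S..lam}" for P'
      using revenue[OF that] r by (simp add: mult_nonneg_nonneg)
    with V show "V \<in> {S..lam} \<and> (\<forall>P'\<in>{S..lam}. D P' * (P' - S) \<le> D V * (V - S))"
      by blast
  next
    fix P assume "P \<in> {S..lam} \<and> (\<forall>P'\<in>{S..lam}. D P' * (P' - S) \<le> D P * (P - S))"
    then have P: "P \<in> {S..lam}" and "D V * (V - S) \<le> D P * (P - S)"
      using V by auto
    then have "r * (P - V)\<^sup>2 \<le> 0"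
      using revenue[OF P] by linarith
    then show "P = V" using r by (simp add: mult_le_0_iff)
  qed
qed

lemma intermediary_price_eq_vertex:
  assumes p1: "p1 > 0" and g: "g > 0" and S: "0 < S"
    and feasible: "S + Ebau p0 p1 / rho p1 g \<le> 2 * lam"
    and lam_small: "lam * rho p1 g < Ebau p0 p1"
  shows "intermediary_price p0 p1 g lam S = (S + Ebau p0 p1 / rho p1 g) / 2"
  unfolding intermediary_price_def
proof (rule argmax_linear_revenue)
  show r: "rho p1 g > 0" using rho_pos[OF p1 g] .
  then have "lam < Ebau p0 p1 / rho p1 g" using lam_small by (simp add: field_simps)
  then show "(S + Ebau p0 p1 / rho p1 g) / 2 \<in> {S..lam}" using feasible by simp
  show "demand p0 p1 g lam P = Ebau p0 p1 - P * rho p1 g" if "P \<in> {S..lam}" for P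
    using that S demand_eq_residual_emissions[OF p1 g _ _ residual_emissions_pos[OF p1 g _ lam_small]]
    by simp
qed

lemma demand_at_intermediary_price:
  assumes p1: "p1 > 0" and g: "g > 0" and S: "0 < S"
    and feasible: "S + Ebau p0 p1 / rho p1 g \<le> 2 * lam"
    and lam_small: "lam * rho p1 g < Ebau p0 p1"
  shows "demand p0 p1 g lam (intermediary_price p0 p1 g lam S) = (Ebau p0 p1 - S * rho p1 g) / 2"
proof -
  have r: "rho p1 g > 0" using rho_pos[OF p1 g] .
  then have "lam < Ebau p0 p1 / rho p1 g" using lam_small by (simp add: field_simps)
  then have "0 < (S + Ebau p0 p1 / rho p1 g) / 2" "(S + Ebau p0 p1 / rho p1 g) / 2 \<le> lam"
    using S feasible by simp_all
  then have "demand p0 p1 g lam ((S + Ebau p0 p1 / rho p1 g) / 2)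
      = Ebau p0 p1 - (S + Ebau p0 p1 / rho p1 g) / 2 * rho p1 g"
    using demand_eq_residual_emissions[OF p1 g _ _ residual_emissions_pos[OF p1 g _ lam_small]]
    by blast
  also have "\<dots> = (Ebau p0 p1 - S * rho p1 g) / 2"
    using r by (simp add: field_simps)
  finally show ?thesis
    unfolding intermediary_price_eq_vertex[OF assms] .
qed

theorem proposition2p6:
  fixes I :: "'c set" and p0 p1 g :: "'c \<Rightarrow> real" and lam S :: real and i :: 'c
  assumes finI: "finite I" and iI: "i \<in> I"
    and pos: "\<And>j. j \<in> I \<Longrightarrow> p0 j > 0 \<and> p1 j > 0 \<and> g j > 0"
    and lam_pos: "lam > 0"
    and lam_small: "\<And>j. j \<in> I \<Longrightarrow> lam * rho (p1 j) (g j) < Ebau (p0 j) (p1 j)"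
  shows "(0 < S \<and> S \<le> lam \<longrightarrow>
            demand (p0 i) (p1 i) (g i) lam (direct_price S) = demand (p0 i) (p1 i) (g i) lam S
          \<and> demand (p0 i) (p1 i) (g i) lam S = Ebau (p0 i) (p1 i) - S * rho (p1 i) (g i))
       \<and> (0 < S \<and> S \<le> 2 * lam - (MAX j\<in>I. Ebau (p0 j) (p1 j) / rho (p1 j) (g j)) \<longrightarrow>
            intermediary_price (p0 i) (p1 i) (g i) lam S
              = (S + Ebau (p0 i) (p1 i) / rho (p1 i) (g i)) / 2
          \<and> demand (p0 i) (p1 i) (g i) lam (intermediary_price (p0 i) (p1 i) (g i) lam S)
              = (Ebau (p0 i) (p1 i) - S * rho (p1 i) (g i)) / 2)"
proof -
  have p1: "p1 i > 0" and g: "g i > 0" using pos[OF iI] by auto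
  have feasible: "S + Ebau (p0 i) (p1 i) / rho (p1 i) (g i) \<le> 2 * lam"
    if "S \<le> 2 * lam - (MAX j\<in>I. Ebau (p0 j) (p1 j) / rho (p1 j) (g j))"
  proof -
    have "Ebau (p0 i) (p1 i) / rho (p1 i) (g i) \<le> (MAX j\<in>I. Ebau (p0 j) (p1 j) / rho (p1 j) (g j))"
      using finI iI by (intro Max_ge) auto
    then show ?thesis using that by linarith
  qed
  show ?thesis
    using demand_eq_residual_emissions[OF p1 g _ _ residual_emissions_pos[OF p1 g _ lam_small[OF iI]]]
      intermediary_price_eq_vertex[OF p1 g _ feasible lam_small[OF iI]]
      demand_at_intermediary_price[OF p1 g _ feasible lam_small[OF iI]]
    by (simp add: direct_price_def)
qed

end
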